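(* For every $\omega$-elementary wqo $A$, $\mathbf{h}(A)=\omega$.
   Context: A wqo is a quasi-order in which every infinite sequence has $i<j$ with $x_i\le x_j$. $\mathbf{h}(A)$ is the rank of the root of the well-founded tree of finite strictly decreasing sequences of $A$ (root: empty sequence, children: one-element extensions; rank $r(s)=\sup\{r(t)+1: t\text{ child of } s\}$). $\omega$-elementary wqos are given by the grammar $A::=\omega\mid A\sqcup B\mid A\times B\mid A^{<\omega}\mid\mathsf{M}^\diamond(A)\mid\mathcal{P}_f(A)$, where $\omega$ is the wqo $(\omega,\le)$, $\sqcup$ is disjoint union ordered by $\le_A\cup\le_B$, $\times$ is Cartesian product with componentwise order, $A^{<\omega}$ is finite words with subword embedding ($u_1\cdots u_n\le v_1\cdots v_m$ iff there are $f_1<\dots<f_n$ with $u_i\le v_{f_i}$), $\mathsf{M}^\diamond(A)$ is finite multisets with multiset embedding, and $\mathcal{P}_f(A)$ is finite subsets with Hoare embedding ($S\le_H S'$ iff $\forall a\in S\,\exists b\in S'\,a\le b$). *)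

theory Defs
  imports Main "HOL-Library.Multiset" "HOL-Library.FSet" "HOL-Library.Sublist"
begin

text \<open>A universe of values in which all omega-elementary wqos live.\<close>
datatype val = VN nat | VL val | VR val | VP val val | VW "val list"
  | VM "val multiset" | VF "val fset"

text \<open>Syntax of omega-elementary wqos.\<close>
datatype wexp = Omega | DSum wexp wexp | Prod wexp wexp | Words wexp
  | MSets wexp | Pfin wexp

fun carrier :: "wexp \<Rightarrow> val set" where
  "carrier Omega = range VN"
| "carrier (DSum A B) = VL ` carrier A \<union> VR ` carrier B"
| "carrier (Prod A B) = {VP x y | x y. x \<in> carrier A \<and> y \<in> carrier B}"
| "carrier (Words A) = {VW xs | xs. set xs \<subseteq> carrier A}"
| "carrier (MSets A) = {VM m | m. set_mset m \<subseteq> carrier A}"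
| "carrier (Pfin A) = {VF s | s. fset s \<subseteq> carrier A}"

text \<open>The quasi-order of each wqo (meaningful on its carrier).\<close>
primrec leq :: "wexp \<Rightarrow> val \<Rightarrow> val \<Rightarrow> bool" where
  "leq Omega x y = (case (x, y) of (VN m, VN n) \<Rightarrow> m \<le> n | _ \<Rightarrow> False)"
| "leq (DSum A B) x y = (case (x, y) of
       (VL x', VL y') \<Rightarrow> leq A x' y'
     | (VR x', VR y') \<Rightarrow> leq B x' y'
     | _ \<Rightarrow> False)"
| "leq (Prod A B) x y = (case (x, y) of
       (VP x1 x2, VP y1 y2) \<Rightarrow> leq A x1 y1 \<and> leq B x2 y2
     | _ \<Rightarrow> False)"
| "leq (Words A) x y = (case (x, y) of
       (VW xs, VW ys) \<Rightarrow> list_emb (leq A) xs ys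
     | _ \<Rightarrow> False)"
| "leq (MSets A) x y = (case (x, y) of
       (VM m, VM m') \<Rightarrow>
         (\<exists>xs ys. mset xs = m \<and> mset ys \<subseteq># m' \<and> list_all2 (leq A) xs ys)
     | _ \<Rightarrow> False)"
| "leq (Pfin A) x y = (case (x, y) of
       (VF s, VF s') \<Rightarrow> (\<forall>a. a |\<in>| s \<longrightarrow> (\<exists>b. b |\<in>| s' \<and> leq A a b))
     | _ \<Rightarrow> False)"

definition less :: "wexp \<Rightarrow> val \<Rightarrow> val \<Rightarrow> bool" where
  "less A x y \<longleftrightarrow> leq A x y \<and> \<not> leq A y x"

definition dec :: "wexp \<Rightarrow> val list \<Rightarrow> bool" where
  "dec A s \<longleftrightarrow> set s \<subseteq> carrier A \<and>
     (\<forall>i. Suc i < length s \<longrightarrow> less A (s ! Suc i) (s ! i))"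

definition child :: "wexp \<Rightarrow> val list \<Rightarrow> val list \<Rightarrow> bool" where
  "child A s t \<longleftrightarrow> dec A t \<and> (\<exists>a. t = s @ [a])"

text \<open>rank_le A s n  means  r(s) \<le> n  (for natural n), following the recursion
  r(s) = sup { r(t)+1 : t child of s }.\<close>
inductive rank_le :: "wexp \<Rightarrow> val list \<Rightarrow> nat \<Rightarrow> bool" for A where
  "(\<And>t. child A s t \<Longrightarrow> \<exists>m<n. rank_le A t m) \<Longrightarrow> rank_le A s n"

text \<open>h(A) = omega: r(root) = sup {r(t)+1 : t child of root} equals omega iff every
  child has finite rank and these ranks are unbounded.\<close>
definition height_is_omega :: "wexp \<Rightarrow> bool" where
  "height_is_omega A \<longleftrightarrow>
     (\<forall>t. child A [] t \<longrightarrow> (\<exists>n. rank_le A t n)) \<and>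
     (\<forall>n. \<exists>t. child A [] t \<and> \<not> rank_le A t n)"

end

theory Submission
  imports Defs
begin

text \<open>Every element of an omega-elementary wqo has only finitely many elements below it,
  and a strict descent from \<open>x\<close> to \<open>y\<close> strictly shrinks the downset. Hence the number of
  elements below the last entry of a decreasing sequence bounds its rank, so every child
  of the root has finite rank. Conversely, every such wqo contains an infinite strictly
  ascending chain \<open>e\<^sub>0 < e\<^sub>1 < \<dots>\<close>, and the one-element sequence \<open>[e\<^sub>n\<^sub>+\<^sub>1]\<close> extends to
  the decreasing sequence \<open>e\<^sub>n\<^sub>+\<^sub>1, \<dots>, e\<^sub>0\<close>, so its rank is at least \<open>n + 1\<close>.\<close>

lemma list_all2_trans_on:
  assumes "\<And>x y z. x \<in> set xs \<Longrightarrow> y \<in> set ys \<Longrightarrow> z \<in> set zs \<Longrightarrow> R x y \<Longrightarrow> R y z \<Longrightarrow> R x z"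
    and "list_all2 R xs ys" "list_all2 R ys zs"
  shows "list_all2 R xs zs"
proof (rule list_all2_all_nthI)
  have len: "length xs = length ys" "length ys = length zs"
    using assms(2,3) by (auto dest: list_all2_lengthD)
  then show "length xs = length zs" by simp
  fix i assume "i < length xs"
  with len have "xs ! i \<in> set xs" "ys ! i \<in> set ys" "zs ! i \<in> set zs"
    and "R (xs ! i) (ys ! i)" "R (ys ! i) (zs ! i)"
    using list_all2_nthD[OF assms(2)] list_all2_nthD[OF assms(3)] by simp_all
  then show "R (xs ! i) (zs ! i)" by (rule assms(1))
qed

lemma list_all2_mset_subset_eq:
  assumes "list_all2 R xs zs" "mset ys \<subseteq># mset xs"
  shows "\<exists>ws. list_all2 R ys ws \<and> mset ws \<subseteq># mset zs"
  using assms
proof (induction ys arbitrary: xs zs)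
  case Nil
  then show ?case by auto
next
  case (Cons y ys)
  have "y \<in> set xs"
    using Cons.prems(2) by (metis mset_subset_eqD list.set_intros(1) set_mset_mset)
  then obtain as bs where xs: "xs = as @ y # bs" by (meson split_list)
  with Cons.prems(1) obtain us z ds where
    zs: "zs = us @ z # ds" "list_all2 R as us" "R y z" "list_all2 R bs ds"
    by (auto simp: list_all2_append1 list_all2_Cons1)
  have "mset ys \<subseteq># mset (as @ bs)" "list_all2 R (as @ bs) (us @ ds)"
    using Cons.prems(2) xs zs by (simp_all add: list_all2_appendI)
  then obtain ws where "list_all2 R ys ws" "mset ws \<subseteq># mset (us @ ds)"
    using Cons.IH by blast
  with zs have "list_all2 R (y # ys) (z # ws)" "mset (z # ws) \<subseteq># mset zs" by simp_all
  then show ?case by blast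
qed

lemma leq_refl: "x \<in> carrier A \<Longrightarrow> leq A x x"
proof (induction A arbitrary: x)
  case (Words A)
  then obtain xs where "x = VW xs" "set xs \<subseteq> carrier A" by auto
  with Words.IH show ?case by (auto intro: list_emb_refl)
next
  case (MSets A)
  then obtain m where m: "x = VM m" "set_mset m \<subseteq> carrier A" by auto
  obtain xs where xs: "mset xs = m" using ex_mset by blast
  with m MSets.IH have "list_all2 (leq A) xs xs"
    by (auto simp: list_all2_conv_all_nth subset_iff)
  with m xs show ?case by auto
next
  case (Pfin A)
  then obtain s where "x = VF s" "fset s \<subseteq> carrier A" by auto
  with Pfin.IH show ?case by auto
qed auto

lemma leq_trans:
  "x \<in> carrier A \<Longrightarrow> y \<in> carrier A \<Longrightarrow> z \<in> carrier A \<Longrightarrow> leq A x y \<Longrightarrow> leq A y z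
    \<Longrightarrow> leq A x z"
proof (induction A arbitrary: x y z)
  case (DSum A B)
  from DSum.prems consider
      (L) a b c where "x = VL a" "y = VL b" "z = VL c"
        "a \<in> carrier A" "b \<in> carrier A" "c \<in> carrier A"
    | (R) a b c where "x = VR a" "y = VR b" "z = VR c"
        "a \<in> carrier B" "b \<in> carrier B" "c \<in> carrier B"
    unfolding carrier.simps by (elim UnE imageE) simp_all
  then show ?case
  proof cases
    case (L a b c)
    with DSum.prems DSum.IH(1)[of a b c] show ?thesis by simp
  next
    case (R a b c)
    with DSum.prems DSum.IH(2)[of a b c] show ?thesis by simp
  qed
next
  case (Prod A B)
  from Prod.prems(1-3) obtain a1 a2 b1 b2 c1 c2 where "x = VP a1 a2" "y = VP b1 b2" "z = VP c1 c2"
    "a1 \<in> carrier A" "b1 \<in> carrier A" "c1 \<in> carrier A"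
    "a2 \<in> carrier B" "b2 \<in> carrier B" "c2 \<in> carrier B"
    by auto
  with Prod.prems Prod.IH(1)[of a1 b1 c1] Prod.IH(2)[of a2 b2 c2] show ?case by simp
next
  case (Words A)
  then obtain xs ys zs where v: "x = VW xs" "y = VW ys" "z = VW zs"
    "set xs \<subseteq> carrier A" "set ys \<subseteq> carrier A" "set zs \<subseteq> carrier A"
    by auto
  with Words have "list_emb (leq A) xs zs"
    by (intro list_emb_trans[of xs ys zs "leq A"]) (auto intro: Words.IH)
  with v show ?case by simp
next
  case (MSets A)
  then obtain m1 m2 m3 where v: "x = VM m1" "y = VM m2" "z = VM m3" and
    m3: "set_mset m3 \<subseteq> carrier A" by auto
  with MSets.prems obtain xs1 ys1 xs2 ys2 where
    xy: "mset xs1 = m1" "mset ys1 \<subseteq># m2" "list_all2 (leq A) xs1 ys1" and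
    yz: "mset xs2 = m2" "mset ys2 \<subseteq># m3" "list_all2 (leq A) xs2 ys2"
    by auto
  obtain ws where ws: "list_all2 (leq A) ys1 ws" "mset ws \<subseteq># mset ys2"
    using list_all2_mset_subset_eq[OF yz(3)] xy(2) yz(1) by blast
  have ws_m3: "mset ws \<subseteq># m3" using ws(2) yz(2) by (rule subset_mset.order_trans)
  have "set xs1 \<subseteq> carrier A" "set ys1 \<subseteq> carrier A" "set ws \<subseteq> carrier A"
    using MSets.prems(1,2) v xy yz m3 ws_m3 by (auto dest!: set_mset_mono)
  then have "list_all2 (leq A) xs1 ws"
    using MSets.IH by (intro list_all2_trans_on[OF _ xy(3) ws(1)]) blast
  with v xy ws_m3 show ?case by auto
next
  case (Pfin A)
  from Pfin.prems(1-3) obtain s1 s2 s3 where v: "x = VF s1" "y = VF s2" "z = VF s3"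
    "fset s1 \<subseteq> carrier A" "fset s2 \<subseteq> carrier A" "fset s3 \<subseteq> carrier A"
    by auto
  with Pfin.prems(4,5) Pfin.IH show ?case by simp (meson subsetD)
qed auto

definition down :: "wexp \<Rightarrow> val \<Rightarrow> val set" where
  "down A x = {y \<in> carrier A. leq A y x}"

lemma finite_down: "x \<in> carrier A \<Longrightarrow> finite (down A x)"
proof (induction A arbitrary: x)
  case Omega
  then obtain n where "x = VN n" by auto
  then have "down Omega x \<subseteq> VN ` {..n}" by (auto simp: down_def)
  then show ?case by (rule finite_subset) simp
next
  case (DSum A B)
  from DSum.prems consider a where "x = VL a" "a \<in> carrier A" | b where "x = VR b" "b \<in> carrier B"
    by auto
  then show ?case
  proof cases
    case (1 a)
    then have "down (DSum A B) x \<subseteq> VL ` down A a" by (auto simp: down_def)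
    then show ?thesis by (rule finite_subset) (simp add: DSum.IH(1) 1)
  next
    case (2 b)
    then have "down (DSum A B) x \<subseteq> VR ` down B b" by (auto simp: down_def)
    then show ?thesis by (rule finite_subset) (simp add: DSum.IH(2) 2)
  qed
next
  case (Prod A B)
  then obtain a b where ab: "x = VP a b" "a \<in> carrier A" "b \<in> carrier B" by auto
  then have "down (Prod A B) x \<subseteq> (\<lambda>(p, q). VP p q) ` (down A a \<times> down B b)"
    by (force simp: down_def)
  then show ?case by (rule finite_subset) (simp add: Prod.IH ab)
next
  case (Words A)
  then obtain xs where xs: "x = VW xs" "set xs \<subseteq> carrier A" by auto
  define D where "D = (\<Union>a\<in>set xs. down A a)"
  have sub: "down (Words A) x \<subseteq> VW ` {ys. set ys \<subseteq> D \<and> length ys \<le> length xs}"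
  proof
    fix y assume "y \<in> down (Words A) x"
    then obtain ys where y: "y = VW ys" "set ys \<subseteq> carrier A" "list_emb (leq A) ys xs"
      using xs by (auto simp: down_def)
    have "set ys \<subseteq> D"
    proof
      fix c assume c: "c \<in> set ys"
      then obtain d where "d \<in> set xs" "leq A c d" using list_emb_set[OF y(3)] by blast
      with c y(2) show "c \<in> D" by (auto simp: D_def down_def)
    qed
    with y show "y \<in> VW ` {ys. set ys \<subseteq> D \<and> length ys \<le> length xs}"
      using list_emb_length by blast
  qed
  have "finite D" unfolding D_def using xs Words.IH by auto
  then show ?case by (intro finite_subset[OF sub] finite_imageI finite_lists_length_le)
next
  case (MSets A)
  then obtain m where m: "x = VM m" "set_mset m \<subseteq> carrier A" by auto
  define D where "D = (\<Union>a\<in>set_mset m. down A a)"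
  have sub: "down (MSets A) x \<subseteq> (\<lambda>xs. VM (mset xs)) ` {xs. set xs \<subseteq> D \<and> length xs \<le> size m}"
  proof
    fix y assume "y \<in> down (MSets A) x"
    then obtain xs ys where y: "y = VM (mset xs)" "set xs \<subseteq> carrier A"
      "mset ys \<subseteq># m" "list_all2 (leq A) xs ys"
      using m by (auto simp: down_def)
    have len: "length xs = length ys" using y(4) by (rule list_all2_lengthD)
    have "set xs \<subseteq> D"
    proof
      fix c assume c: "c \<in> set xs"
      then obtain i where i: "i < length xs" "c = xs ! i" by (auto simp: in_set_conv_nth)
      have "leq A c (ys ! i)" using list_all2_nthD[OF y(4) i(1)] i(2) by simp
      moreover have "ys ! i \<in># m"
        using i(1) len y(3) by (metis mset_subset_eqD nth_mem set_mset_mset)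
      ultimately show "c \<in> D" using c y(2) by (auto simp: D_def down_def)
    qed
    moreover have "length xs \<le> size m"
      using len y(3) by (metis size_mset size_mset_mono)
    ultimately show "y \<in> (\<lambda>xs. VM (mset xs)) ` {xs. set xs \<subseteq> D \<and> length xs \<le> size m}"
      using y(1) by blast
  qed
  have "finite D" unfolding D_def using m MSets.IH by auto
  then show ?case by (intro finite_subset[OF sub] finite_imageI finite_lists_length_le)
next
  case (Pfin A)
  then obtain s where s: "x = VF s" "fset s \<subseteq> carrier A" by auto
  define D where "D = (\<Union>a\<in>fset s. down A a)"
  have "down (Pfin A) x \<subseteq> VF ` {t. fset t \<subseteq> D}"
  proof
    fix y assume "y \<in> down (Pfin A) x"
    then obtain t where t: "y = VF t" "fset t \<subseteq> carrier A"
      "\<forall>a. a |\<in>| t \<longrightarrow> (\<exists>b. b |\<in>| s \<and> leq A a b)"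
      using s by (auto simp: down_def)
    then have "fset t \<subseteq> D" by (auto simp: D_def down_def)
    with t(1) show "y \<in> VF ` {t. fset t \<subseteq> D}" by simp
  qed
  moreover have "finite {t. fset t \<subseteq> D}"
  proof (rule finite_imageD)
    have "finite D" unfolding D_def using s Pfin.IH by auto
    then show "finite (fset ` {t. fset t \<subseteq> D})" by (simp add: finite_subset[of _ "Pow D"] image_subset_iff)
    show "inj_on fset {t. fset t \<subseteq> D}" by (meson fset_inject inj_onI)
  qed
  ultimately show ?case by (metis finite_subset finite_imageI)
qed

lemma card_down_less:
  assumes "x \<in> carrier A" "y \<in> carrier A" "less A y x"
  shows "card (down A y) < card (down A x)"
proof (rule psubset_card_mono)
  show "finite (down A x)" using assms(1) by (rule finite_down)
  have "down A y \<subseteq> down A x"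
    using assms leq_trans[of _ A y x] by (auto simp: down_def less_def)
  moreover have "x \<in> down A x" "x \<notin> down A y"
    using assms leq_refl by (auto simp: down_def less_def)
  ultimately show "down A y \<subset> down A x" by blast
qed

lemma leq_MSets_singleton: "leq (MSets A) (VM {#x#}) (VM {#y#}) = leq A x y"
proof
  assume "leq (MSets A) (VM {#x#}) (VM {#y#})"
  then obtain ys where "mset ys \<subseteq># {#y#}" "list_all2 (leq A) [x] ys" by auto
  then show "leq A x y" by (auto simp: list_all2_Cons1)
next
  assume "leq A x y"
  then show "leq (MSets A) (VM {#x#}) (VM {#y#})" by (auto intro!: exI[of _ "[x]"] exI[of _ "[y]"])
qed

lemma ascending_chain_exists:
  "\<exists>e. (\<forall>k. e k \<in> carrier A) \<and> (\<forall>k. less A (e k) (e (Suc k)))"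
proof (induction A)
  case Omega
  show ?case by (rule exI[of _ VN]) (auto simp: less_def)
next
  case (DSum A B)
  then obtain e where "\<forall>k. e k \<in> carrier A" "\<forall>k. less A (e k) (e (Suc k))" by blast
  then show ?case by (intro exI[of _ "\<lambda>k. VL (e k)"]) (auto simp: less_def)
next
  case (Prod A B)
  then obtain e f where "\<forall>k. e k \<in> carrier A" "\<forall>k. less A (e k) (e (Suc k))"
    "\<forall>k. f k \<in> carrier B" "\<forall>k. less B (f k) (f (Suc k))" by blast
  then show ?case by (intro exI[of _ "\<lambda>k. VP (e k) (f k)"]) (auto simp: less_def)
next
  case (Words A)
  then obtain e where "\<forall>k. e k \<in> carrier A" "\<forall>k. less A (e k) (e (Suc k))" by blast
  then show ?case by (intro exI[of _ "\<lambda>k. VW [e k]"]) (auto simp: less_def)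
next
  case (MSets A)
  then obtain e where "\<forall>k. e k \<in> carrier A" "\<forall>k. less A (e k) (e (Suc k))" by blast
  then show ?case
    by (intro exI[of _ "\<lambda>k. VM {#e k#}"]) (auto simp: less_def leq_MSets_singleton simp del: leq.simps)
next
  case (Pfin A)
  then obtain e where "\<forall>k. e k \<in> carrier A" "\<forall>k. less A (e k) (e (Suc k))" by blast
  then show ?case by (intro exI[of _ "\<lambda>k. VF {|e k|}"]) (auto simp: less_def)
qed

lemma dec_snoc_iff:
  assumes "s \<noteq> []"
  shows "dec A (s @ [b]) \<longleftrightarrow> dec A s \<and> b \<in> carrier A \<and> less A b (last s)"
proof -
  have steps: "Suc i < length (s @ [b]) \<longleftrightarrow> Suc i < length s \<or> Suc i = length s" for i
    by auto
  have "(s @ [b]) ! Suc i = b \<and> (s @ [b]) ! i = last s" if "Suc i = length s" for i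
    using that assms by (simp add: nth_append last_conv_nth flip: that)
  moreover have "(s @ [b]) ! Suc i = s ! Suc i \<and> (s @ [b]) ! i = s ! i" if "Suc i < length s" for i
    using that by (simp add: nth_append)
  moreover have "Suc (length s - 1) = length s" using assms by simp
  ultimately show ?thesis
    unfolding dec_def steps by (auto simp del: length_append_singleton)
qed

lemma rank_le_measure:
  assumes decreasing: "\<And>a b. a \<in> carrier A \<Longrightarrow> b \<in> carrier A \<Longrightarrow> less A b a \<Longrightarrow> f b < f a"
  shows "dec A s \<Longrightarrow> s \<noteq> [] \<Longrightarrow> rank_le A s (f (last s))"
proof (induction "f (last s)" arbitrary: s rule: less_induct)
  case less
  show ?case
  proof (rule rank_le.intros)
    fix t assume "child A s t"
    then obtain b where t: "t = s @ [b]" "dec A t" by (auto simp: child_def)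
    with less.prems have "b \<in> carrier A" "less A b (last s)"
      by (simp_all add: dec_snoc_iff)
    moreover have "last s \<in> carrier A" using less.prems by (auto simp: dec_def)
    ultimately have descent: "f b < f (last s)" by (simp add: decreasing)
    then have "rank_le A t (f b)" using less.hyps[of t] t by simp
    with descent show "\<exists>m<f (last s). rank_le A t m" by blast
  qed
qed

lemma not_rank_le_chain:
  assumes e: "\<forall>k. e k \<in> carrier A" "\<forall>k. less A (e k) (e (Suc k))"
  shows "dec A s \<Longrightarrow> s \<noteq> [] \<Longrightarrow> last s = e m \<Longrightarrow> k < m \<Longrightarrow> \<not> rank_le A s k"
proof (induction m arbitrary: s k)
  case 0
  then show ?case by simp
next
  case (Suc m)
  show ?case
  proof
    assume "rank_le A s k"
    then have ranks: "\<And>t. child A s t \<Longrightarrow> \<exists>m'<k. rank_le A t m'" by (rule rank_le.cases) simp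
    have "dec A (s @ [e m])" using Suc.prems e by (simp add: dec_snoc_iff)
    then obtain m' where "m' < k" "rank_le A (s @ [e m]) m'"
      using ranks by (auto simp: child_def)
    with Suc.IH[of "s @ [e m]" m'] \<open>dec A (s @ [e m])\<close> Suc.prems(4) show False by simp
  qed
qed

theorem mainTheorem20:
  fixes A :: wexp
  shows "height_is_omega A"
  unfolding height_is_omega_def
proof (intro conjI allI impI)
  fix t assume "child A [] t"
  then have "dec A t" "t \<noteq> []" by (auto simp: child_def)
  with rank_le_measure[of A "\<lambda>x. card (down A x)"] card_down_less
  show "\<exists>n. rank_le A t n" by blast
next
  fix n
  obtain e where e: "\<forall>k. e k \<in> carrier A" "\<forall>k. less A (e k) (e (Suc k))"
    using ascending_chain_exists by blast
  then have "child A [] [e (Suc n)]" by (simp add: child_def dec_def)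
  moreover have "\<not> rank_le A [e (Suc n)] n"
    using not_rank_le_chain[OF e] e by (simp add: dec_def)
  ultimately show "\<exists>t. child A [] t \<and> \<not> rank_le A t n" by blast
qed

end
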